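(* Let ${\cal C}$ be a semi-degenerate congruence-modular variety and $A\in{\cal C}$ a semiprime algebra. Then for every $\Omega\subseteq{\rm Con}(A)$ there exists $\theta\in{\rm Con}(A)$ such that ${\rm Ann}_{{\rm Con}(A)}(\Omega)={\rm Ann}_{{\rm Con}(A)}(\theta)$; that is, $\{{\rm Ann}_{{\rm Con}(A)}(\Omega)\mid\Omega\subseteq{\rm Con}(A)\}=\{{\rm Ann}_{{\rm Con}(A)}(\theta)\mid\theta\in{\rm Con}(A)\}$.
   Context: ${\cal C}$ semi-degenerate: no nontrivial member has a one-element subalgebra. ${\rm Con}(A)$: congruence lattice with bounds $\Delta_A,\nabla_A=A^2$; $[\cdot,\cdot]_A$: modular commutator. A congruence $\phi\ne\nabla_A$ is prime if $[\theta,\zeta]_A\subseteq\phi$ implies $\theta\subseteq\phi$ or $\zeta\subseteq\phi$. $\rho_A(\theta)$: intersection of all prime congruences containing $\theta$. $A$ semiprime: $\rho_A(\Delta_A)=\Delta_A$. In the lattice ${\rm Con}(A)$, ${\rm Ann}_{{\rm Con}(A)}(\Omega)=\{\zeta\in{\rm Con}(A)\mid\zeta\cap\omega=\Delta_A\ \forall\omega\in\Omega\}$ and ${\rm Ann}_{{\rm Con}(A)}(\theta)={\rm Ann}_{{\rm Con}(A)}(\{\theta\})$. *)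

theory Defs
  imports Main
begin

text \<open>A signature is given by a type of operation symbols 'f together with an
arity function.\<close>

record ('a, 'f) alg =
  carrier :: "'a set"
  ops :: "'f \<Rightarrow> 'a list \<Rightarrow> 'a"

definition is_alg :: "('f \<Rightarrow> nat) \<Rightarrow> ('a, 'f) alg \<Rightarrow> bool" where
  "is_alg ar A \<longleftrightarrow> carrier A \<noteq> {} \<and>
     (\<forall>f xs. length xs = ar f \<and> set xs \<subseteq> carrier A \<longrightarrow> ops A f xs \<in> carrier A)"

datatype ('f, 'v) trm = Var 'v | App 'f "('f, 'v) trm list"

fun wf_trm :: "('f \<Rightarrow> nat) \<Rightarrow> ('f, 'v) trm \<Rightarrow> bool" where
  "wf_trm ar (Var v) = True"
| "wf_trm ar (App f ts) = (length ts = ar f \<and> list_all (wf_trm ar) ts)"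

fun teval :: "('a, 'f) alg \<Rightarrow> ('v \<Rightarrow> 'a) \<Rightarrow> ('f, 'v) trm \<Rightarrow> 'a" where
  "teval A \<rho> (Var v) = \<rho> v"
| "teval A \<rho> (App f ts) = ops A f (map (teval A \<rho>) ts)"

definition satisfies :: "('a, 'f) alg \<Rightarrow> (('f, nat) trm \<times> ('f, nat) trm) set \<Rightarrow> bool" where
  "satisfies A E \<longleftrightarrow> (\<forall>(s, t) \<in> E. \<forall>\<rho>. range \<rho> \<subseteq> carrier A \<longrightarrow> teval A \<rho> s = teval A \<rho> t)"

definition in_var :: "('f \<Rightarrow> nat) \<Rightarrow> (('f, nat) trm \<times> ('f, nat) trm) set \<Rightarrow> ('a, 'f) alg \<Rightarrow> bool" where
  "in_var ar E A \<longleftrightarrow> is_alg ar A \<and> satisfies A E"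

definition is_cong :: "('f \<Rightarrow> nat) \<Rightarrow> ('a, 'f) alg \<Rightarrow> ('a \<times> 'a) set \<Rightarrow> bool" where
  "is_cong ar A \<theta> \<longleftrightarrow> \<theta> \<subseteq> carrier A \<times> carrier A \<and> equiv (carrier A) \<theta> \<and>
     (\<forall>f xs ys. length xs = ar f \<and> length ys = ar f \<and> list_all2 (\<lambda>x y. (x, y) \<in> \<theta>) xs ys
        \<longrightarrow> (ops A f xs, ops A f ys) \<in> \<theta>)"

definition Con :: "('f \<Rightarrow> nat) \<Rightarrow> ('a, 'f) alg \<Rightarrow> ('a \<times> 'a) set set" where
  "Con ar A = {\<theta>. is_cong ar A \<theta>}"

definition Delta :: "('a, 'f) alg \<Rightarrow> ('a \<times> 'a) set" where
  "Delta A = Id_on (carrier A)"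

definition Nabla :: "('a, 'f) alg \<Rightarrow> ('a \<times> 'a) set" where
  "Nabla A = carrier A \<times> carrier A"

definition cjoin :: "('f \<Rightarrow> nat) \<Rightarrow> ('a, 'f) alg \<Rightarrow> ('a \<times> 'a) set \<Rightarrow> ('a \<times> 'a) set \<Rightarrow> ('a \<times> 'a) set" where
  "cjoin ar A \<theta> \<zeta> = \<Inter>{\<phi> \<in> Con ar A. \<theta> \<union> \<zeta> \<subseteq> \<phi>}"

definition con_modular :: "('f \<Rightarrow> nat) \<Rightarrow> ('a, 'f) alg \<Rightarrow> bool" where
  "con_modular ar A \<longleftrightarrow> (\<forall>\<alpha>\<in>Con ar A. \<forall>\<beta>\<in>Con ar A. \<forall>\<gamma>\<in>Con ar A.
      \<alpha> \<subseteq> \<gamma> \<longrightarrow> cjoin ar A \<alpha> (\<beta> \<inter> \<gamma>) = cjoin ar A \<alpha> \<beta> \<inter> \<gamma>)"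

text \<open>Properties of the variety defined by (ar, E), restricted to members whose
universe lies in the type 'b. When 'b is at least as large as the type of terms
('f, nat) trm, these are equivalent to the properties of the whole variety
(Day's theorem for modularity, 4-generated free algebra; 2-generated subalgebras
for semi-degeneracy).\<close>

definition cm_variety_on ::
  "'b itself \<Rightarrow> ('f \<Rightarrow> nat) \<Rightarrow> (('f, nat) trm \<times> ('f, nat) trm) set \<Rightarrow> bool" where
  "cm_variety_on _ ar E \<longleftrightarrow> (\<forall>B :: ('b, 'f) alg. in_var ar E B \<longrightarrow> con_modular ar B)"

definition one_elem_subalg :: "('f \<Rightarrow> nat) \<Rightarrow> ('a, 'f) alg \<Rightarrow> 'a \<Rightarrow> bool" where
  "one_elem_subalg ar A e \<longleftrightarrow> e \<in> carrier A \<and> (\<forall>f. ops A f (replicate (ar f) e) = e)"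

definition semi_degenerate_on ::
  "'b itself \<Rightarrow> ('f \<Rightarrow> nat) \<Rightarrow> (('f, nat) trm \<times> ('f, nat) trm) set \<Rightarrow> bool" where
  "semi_degenerate_on _ ar E \<longleftrightarrow> (\<forall>B :: ('b, 'f) alg.
      in_var ar E B \<and> (\<exists>x\<in>carrier B. \<exists>y\<in>carrier B. x \<noteq> y) \<longrightarrow> \<not> (\<exists>e. one_elem_subalg ar B e))"

text \<open>C(alpha, beta; delta): for every term t(x1..,y1..) and tuples a,b (pairwise
alpha-related) and c,d (pairwise beta-related):
t(a,c) delta t(a,d) implies t(b,c) delta t(b,d).\<close>

definition centralizes ::
  "('f \<Rightarrow> nat) \<Rightarrow> ('a, 'f) alg \<Rightarrow> ('a \<times> 'a) set \<Rightarrow> ('a \<times> 'a) set \<Rightarrow> ('a \<times> 'a) set \<Rightarrow> bool" where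
  "centralizes ar A \<alpha> \<beta> \<delta> \<longleftrightarrow>
    (\<forall>(t :: ('f, nat + nat) trm) (a :: nat \<Rightarrow> 'a) b c d.
       wf_trm ar t \<and> (\<forall>i. (a i, b i) \<in> \<alpha>) \<and> (\<forall>j. (c j, d j) \<in> \<beta>) \<and>
       (teval A (case_sum a c) t, teval A (case_sum a d) t) \<in> \<delta>
       \<longrightarrow> (teval A (case_sum b c) t, teval A (case_sum b d) t) \<in> \<delta>)"

definition comm :: "('f \<Rightarrow> nat) \<Rightarrow> ('a, 'f) alg \<Rightarrow> ('a \<times> 'a) set \<Rightarrow> ('a \<times> 'a) set \<Rightarrow> ('a \<times> 'a) set" where
  "comm ar A \<alpha> \<beta> = \<Inter>{\<delta> \<in> Con ar A. centralizes ar A \<alpha> \<beta> \<delta>}"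

definition prime_cong :: "('f \<Rightarrow> nat) \<Rightarrow> ('a, 'f) alg \<Rightarrow> ('a \<times> 'a) set \<Rightarrow> bool" where
  "prime_cong ar A \<phi> \<longleftrightarrow> \<phi> \<in> Con ar A \<and> \<phi> \<noteq> Nabla A \<and>
     (\<forall>\<theta>\<in>Con ar A. \<forall>\<zeta>\<in>Con ar A. comm ar A \<theta> \<zeta> \<subseteq> \<phi> \<longrightarrow> \<theta> \<subseteq> \<phi> \<or> \<zeta> \<subseteq> \<phi>)"

text \<open>Intersection taken inside Con(A); the empty intersection is Nabla.\<close>

definition rad :: "('f \<Rightarrow> nat) \<Rightarrow> ('a, 'f) alg \<Rightarrow> ('a \<times> 'a) set \<Rightarrow> ('a \<times> 'a) set" where
  "rad ar A \<theta> = Nabla A \<inter> \<Inter>{\<phi>. prime_cong ar A \<phi> \<and> \<theta> \<subseteq> \<phi>}"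

definition semiprime :: "('f \<Rightarrow> nat) \<Rightarrow> ('a, 'f) alg \<Rightarrow> bool" where
  "semiprime ar A \<longleftrightarrow> rad ar A (Delta A) = Delta A"

definition Ann :: "('f \<Rightarrow> nat) \<Rightarrow> ('a, 'f) alg \<Rightarrow> ('a \<times> 'a) set set \<Rightarrow> ('a \<times> 'a) set set" where
  "Ann ar A \<Omega> = {\<zeta> \<in> Con ar A. \<forall>\<omega>\<in>\<Omega>. \<zeta> \<inter> \<omega> = Delta A}"

end

theory Submission
  imports Defs
begin

text \<open>Let \<open>\<theta>\<close> be the congruence generated by \<open>\<Union>\<Omega>\<close>. If \<open>\<zeta>\<close> annihilates every
\<open>\<omega> \<in> \<Omega>\<close>, then \<open>[\<zeta>,\<omega>] \<subseteq> \<zeta> \<inter> \<omega> = \<Delta>\<close>, so every prime congruence contains \<open>\<zeta>\<close>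
or all of \<open>\<Omega>\<close>, hence \<open>\<zeta>\<close> or \<open>\<theta>\<close>. Thus \<open>\<zeta> \<inter> \<theta> \<subseteq> \<rho>(\<Delta>) = \<Delta>\<close> by semiprimeness, and
\<open>Ann(\<Omega>) = Ann(\<theta>)\<close>.\<close>

lemma Con_subset_carrier: "\<theta> \<in> Con ar A \<Longrightarrow> \<theta> \<subseteq> carrier A \<times> carrier A"
  by (simp add: Con_def is_cong_def)

lemma Con_equiv: "\<theta> \<in> Con ar A \<Longrightarrow> equiv (carrier A) \<theta>"
  by (simp add: Con_def is_cong_def)

lemma Delta_subset_Con: "\<theta> \<in> Con ar A \<Longrightarrow> Delta A \<subseteq> \<theta>"
  unfolding Delta_def Con_def is_cong_def equiv_def refl_on_def by auto

lemma teval_cong: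
  assumes "\<theta> \<in> Con ar A" and "wf_trm ar t" and "\<forall>v. (\<rho> v, \<sigma> v) \<in> \<theta>"
  shows "(teval A \<rho> t, teval A \<sigma> t) \<in> \<theta>"
  using assms(2)
proof (induction t)
  case (Var v)
  then show ?case using assms(3) by simp
next
  case (App f ts)
  have "list_all2 (\<lambda>x y. (x, y) \<in> \<theta>) (map (teval A \<rho>) ts) (map (teval A \<sigma>) ts)"
    using App by (auto simp: list_all_iff intro!: list_all2_all_nthI)
  then show ?case using App.prems assms(1) by (simp add: Con_def is_cong_def)
qed

lemma Nabla_in_Con:
  assumes "is_alg ar A"
  shows "Nabla A \<in> Con ar A"
proof -
  have "ops A f xs \<in> carrier A \<and> ops A f ys \<in> carrier A"
    if "length xs = ar f" "length ys = ar f"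
      and "list_all2 (\<lambda>x y. (x, y) \<in> carrier A \<times> carrier A) xs ys" for f xs ys
  proof -
    have "set xs \<subseteq> carrier A" "set ys \<subseteq> carrier A"
      using that by (auto simp: list_all2_conv_all_nth in_set_conv_nth)
    then show ?thesis using assms that unfolding is_alg_def by blast
  qed
  then show ?thesis
    unfolding Con_def is_cong_def Nabla_def by (auto simp: equiv_def refl_on_def sym_def trans_def)
qed

lemma Inter_in_Con:
  assumes S: "S \<subseteq> Con ar A" "S \<noteq> {}"
  shows "\<Inter>S \<in> Con ar A"
proof -
  obtain s where "s \<in> S" using S by blast
  then have sub: "\<Inter>S \<subseteq> carrier A \<times> carrier A" using S Con_subset_carrier by blast
  have eq: "equiv (carrier A) \<phi>" if "\<phi> \<in> S" for \<phi> using S that Con_equiv by blast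
  have "equiv (carrier A) (\<Inter>S)"
  proof (rule equivI)
    show "\<Inter>S \<subseteq> carrier A \<times> carrier A" by (rule sub)
    show "refl_on (carrier A) (\<Inter>S)"
      using eq sub unfolding refl_on_def equiv_def by blast
    show "sym (\<Inter>S)" using eq unfolding sym_def equiv_def by blast
    show "trans (\<Inter>S)" using eq unfolding trans_def equiv_def by blast
  qed
  moreover have "(ops A f xs, ops A f ys) \<in> \<phi>"
    if "length xs = ar f" "length ys = ar f" "list_all2 (\<lambda>x y. (x, y) \<in> \<Inter>S) xs ys" "\<phi> \<in> S"
    for f xs ys \<phi>
  proof -
    have "list_all2 (\<lambda>x y. (x, y) \<in> \<phi>) xs ys" using that by (auto elim: list_all2_mono)
    then show ?thesis using that S unfolding Con_def is_cong_def by blast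
  qed
  ultimately show ?thesis using sub unfolding Con_def is_cong_def by blast
qed

lemma centralizes_left:
  fixes ar :: "'f \<Rightarrow> nat" and A :: "('a, 'f) alg"
  assumes \<alpha>: "\<alpha> \<in> Con ar A" and \<beta>: "\<beta> \<subseteq> carrier A \<times> carrier A"
  shows "centralizes ar A \<alpha> \<beta> \<alpha>"
  unfolding centralizes_def
proof (intro allI impI, elim conjE)
  fix t :: "('f, nat + nat) trm" and a b c d :: "nat \<Rightarrow> 'a"
  assume t: "wf_trm ar t" and ab: "\<forall>i. (a i, b i) \<in> \<alpha>" and cd: "\<forall>j. (c j, d j) \<in> \<beta>"
    and ac_ad: "(teval A (case_sum a c) t, teval A (case_sum a d) t) \<in> \<alpha>"
  have eq: "equiv (carrier A) \<alpha>" using Con_equiv[OF \<alpha>] .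
  have refl: "(x, x) \<in> \<alpha>" if "x \<in> carrier A" for x
    using eq that by (auto simp: equiv_def refl_on_def)
  have sym: "(y, x) \<in> \<alpha>" if "(x, y) \<in> \<alpha>" for x y
    using eq that by (auto simp: equiv_def sym_def)
  have "c j \<in> carrier A" "d j \<in> carrier A" for j using cd \<beta> by auto
  then have "(case_sum b c v, case_sum a c v) \<in> \<alpha>" "(case_sum a d v, case_sum b d v) \<in> \<alpha>" for v
    using ab by (auto intro: refl sym split: sum.split)
  then have "(teval A (case_sum b c) t, teval A (case_sum a c) t) \<in> \<alpha>"
    and "(teval A (case_sum a d) t, teval A (case_sum b d) t) \<in> \<alpha>"
    by (blast intro: teval_cong[OF \<alpha> t])+
  then show "(teval A (case_sum b c) t, teval A (case_sum b d) t) \<in> \<alpha>"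
    using ac_ad eq unfolding equiv_def trans_def by blast
qed

lemma centralizes_right:
  fixes ar :: "'f \<Rightarrow> nat" and A :: "('a, 'f) alg"
  assumes \<alpha>: "\<alpha> \<subseteq> carrier A \<times> carrier A" and \<beta>: "\<beta> \<in> Con ar A"
  shows "centralizes ar A \<alpha> \<beta> \<beta>"
  unfolding centralizes_def
proof (intro allI impI, elim conjE)
  fix t :: "('f, nat + nat) trm" and a b c d :: "nat \<Rightarrow> 'a"
  assume t: "wf_trm ar t" and ab: "\<forall>i. (a i, b i) \<in> \<alpha>" and cd: "\<forall>j. (c j, d j) \<in> \<beta>"
  have "(b i, b i) \<in> \<beta>" for i
    using ab \<alpha> Con_equiv[OF \<beta>] by (auto simp: equiv_def refl_on_def)
  then show "(teval A (case_sum b c) t, teval A (case_sum b d) t) \<in> \<beta>"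
    using cd by (auto intro!: teval_cong[OF \<beta> t] split: sum.split)
qed

lemma comm_subset_Int:
  assumes "\<alpha> \<in> Con ar A" "\<beta> \<in> Con ar A"
  shows "comm ar A \<alpha> \<beta> \<subseteq> \<alpha> \<inter> \<beta>"
  using assms centralizes_left[of \<alpha> ar A \<beta>] centralizes_right[of \<alpha> A \<beta> ar]
  by (auto simp: comm_def Con_subset_carrier)

definition cong_generated :: "('f \<Rightarrow> nat) \<Rightarrow> ('a, 'f) alg \<Rightarrow> ('a \<times> 'a) set \<Rightarrow> ('a \<times> 'a) set" where
  "cong_generated ar A R = \<Inter>{\<phi> \<in> Con ar A. R \<subseteq> \<phi>}"

lemma cong_generated_in_Con:
  assumes "is_alg ar A" and "R \<subseteq> Nabla A"
  shows "cong_generated ar A R \<in> Con ar A"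
  unfolding cong_generated_def using assms Nabla_in_Con by (intro Inter_in_Con) auto

lemma cong_generated_Union_in_Con:
  assumes "is_alg ar A" and "\<Omega> \<subseteq> Con ar A"
  shows "cong_generated ar A (\<Union>\<Omega>) \<in> Con ar A"
proof (rule cong_generated_in_Con[OF assms(1)])
  show "\<Union>\<Omega> \<subseteq> Nabla A" using assms(2) Con_subset_carrier unfolding Nabla_def by blast
qed

lemma subset_cong_generated: "R \<subseteq> cong_generated ar A R"
  unfolding cong_generated_def by blast

lemma cong_generated_least: "\<phi> \<in> Con ar A \<Longrightarrow> R \<subseteq> \<phi> \<Longrightarrow> cong_generated ar A R \<subseteq> \<phi>"
  unfolding cong_generated_def by blast

lemma prime_congD:
  assumes "prime_cong ar A \<phi>" "\<alpha> \<in> Con ar A" "\<beta> \<in> Con ar A" "comm ar A \<alpha> \<beta> \<subseteq> \<phi>"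
  shows "\<alpha> \<subseteq> \<phi> \<or> \<beta> \<subseteq> \<phi>"
  using assms unfolding prime_cong_def by blast

lemma subset_rad:
  assumes "R \<subseteq> Nabla A" and "\<And>\<phi>. prime_cong ar A \<phi> \<Longrightarrow> \<theta> \<subseteq> \<phi> \<Longrightarrow> R \<subseteq> \<phi>"
  shows "R \<subseteq> rad ar A \<theta>"
  using assms unfolding rad_def by blast

lemma Ann_cong_generated_subset:
  assumes \<Omega>: "\<Omega> \<subseteq> Con ar A"
  shows "Ann ar A {cong_generated ar A (\<Union>\<Omega>)} \<subseteq> Ann ar A \<Omega>"
proof
  fix \<zeta> assume "\<zeta> \<in> Ann ar A {cong_generated ar A (\<Union>\<Omega>)}"
  then have \<zeta>: "\<zeta> \<in> Con ar A" and \<zeta>\<theta>: "\<zeta> \<inter> cong_generated ar A (\<Union>\<Omega>) = Delta A"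
    by (auto simp: Ann_def)
  have "\<zeta> \<inter> \<omega> = Delta A" if \<omega>: "\<omega> \<in> \<Omega>" for \<omega>
  proof
    have "\<omega> \<subseteq> cong_generated ar A (\<Union>\<Omega>)" using \<omega> subset_cong_generated by blast
    then show "\<zeta> \<inter> \<omega> \<subseteq> Delta A" using \<zeta>\<theta> by blast
    show "Delta A \<subseteq> \<zeta> \<inter> \<omega>" using Delta_subset_Con \<zeta> \<omega> \<Omega> by blast
  qed
  then show "\<zeta> \<in> Ann ar A \<Omega>" using \<zeta> by (simp add: Ann_def)
qed

lemma prime_cong_absorbs_Ann:
  assumes \<phi>: "prime_cong ar A \<phi>" and \<Omega>: "\<Omega> \<subseteq> Con ar A" and \<zeta>: "\<zeta> \<in> Ann ar A \<Omega>"
    and \<zeta>\<phi>: "\<not> \<zeta> \<subseteq> \<phi>"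
  shows "cong_generated ar A (\<Union>\<Omega>) \<subseteq> \<phi>"
proof -
  have \<phi>_Con: "\<phi> \<in> Con ar A" using \<phi> unfolding prime_cong_def by (rule conjunct1)
  have \<zeta>_Con: "\<zeta> \<in> Con ar A" and \<zeta>\<Omega>: "\<forall>\<omega>\<in>\<Omega>. \<zeta> \<inter> \<omega> = Delta A"
    using \<zeta> unfolding Ann_def by blast+
  have "\<omega> \<subseteq> \<phi>" if \<omega>: "\<omega> \<in> \<Omega>" for \<omega>
  proof -
    have \<omega>_Con: "\<omega> \<in> Con ar A" using \<omega> \<Omega> by blast
    have "comm ar A \<zeta> \<omega> \<subseteq> \<zeta> \<inter> \<omega>" using comm_subset_Int[OF \<zeta>_Con \<omega>_Con] .
    also have "\<dots> = Delta A" using \<zeta>\<Omega> \<omega> by (rule bspec)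
    also have "\<dots> \<subseteq> \<phi>" using Delta_subset_Con[OF \<phi>_Con] .
    finally have "\<zeta> \<subseteq> \<phi> \<or> \<omega> \<subseteq> \<phi>" by (rule prime_congD[OF \<phi> \<zeta>_Con \<omega>_Con])
    with \<zeta>\<phi> show ?thesis by simp
  qed
  then show ?thesis by (intro cong_generated_least[OF \<phi>_Con] Union_least)
qed

lemma Ann_subset_Ann_cong_generated:
  assumes alg: "is_alg ar A" and sp: "semiprime ar A" and \<Omega>: "\<Omega> \<subseteq> Con ar A"
  shows "Ann ar A \<Omega> \<subseteq> Ann ar A {cong_generated ar A (\<Union>\<Omega>)}"
proof
  fix \<zeta> assume \<zeta>: "\<zeta> \<in> Ann ar A \<Omega>"
  let ?\<theta> = "cong_generated ar A (\<Union>\<Omega>)"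
  have \<zeta>_Con: "\<zeta> \<in> Con ar A" using \<zeta> by (simp add: Ann_def)
  have \<theta>_Con: "?\<theta> \<in> Con ar A" using cong_generated_Union_in_Con[OF alg \<Omega>] .
  have "\<zeta> \<inter> ?\<theta> \<subseteq> rad ar A (Delta A)"
  proof (rule subset_rad)
    show "\<zeta> \<inter> ?\<theta> \<subseteq> Nabla A" using Con_subset_carrier[OF \<zeta>_Con] unfolding Nabla_def by blast
    show "\<zeta> \<inter> ?\<theta> \<subseteq> \<phi>" if "prime_cong ar A \<phi>" for \<phi>
      using prime_cong_absorbs_Ann[OF that \<Omega> \<zeta>] by blast
  qed
  then have "\<zeta> \<inter> ?\<theta> = Delta A"
    using sp Delta_subset_Con[OF \<zeta>_Con] Delta_subset_Con[OF \<theta>_Con] by (auto simp: semiprime_def)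
  then show "\<zeta> \<in> Ann ar A {?\<theta>}" using \<zeta>_Con by (simp add: Ann_def)
qed

theorem lemma2p26:
  fixes ar :: "'f \<Rightarrow> nat"
    and E :: "(('f, nat) trm \<times> ('f, nat) trm) set"
    and A :: "('a, 'f) alg"
  assumes wfE: "\<forall>(s, t) \<in> E. wf_trm ar s \<and> wf_trm ar t"
    and big: "\<exists>g :: ('f, nat) trm \<Rightarrow> 'b. inj g"
    and cm: "cm_variety_on TYPE('b) ar E"
    and sd: "semi_degenerate_on TYPE('b) ar E"
    and A_in: "in_var ar E A"
    and sp: "semiprime ar A"
  shows "(\<forall>\<Omega> \<subseteq> Con ar A. \<exists>\<theta> \<in> Con ar A. Ann ar A \<Omega> = Ann ar A {\<theta>}) \<and>
         {Ann ar A \<Omega> | \<Omega>. \<Omega> \<subseteq> Con ar A} = {Ann ar A {\<theta>} | \<theta>. \<theta> \<in> Con ar A}"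
proof -
  have alg: "is_alg ar A" using A_in by (simp add: in_var_def)
  have principal: "\<exists>\<theta> \<in> Con ar A. Ann ar A \<Omega> = Ann ar A {\<theta>}" if \<Omega>: "\<Omega> \<subseteq> Con ar A" for \<Omega>
  proof
    show "cong_generated ar A (\<Union>\<Omega>) \<in> Con ar A" using cong_generated_Union_in_Con[OF alg \<Omega>] .
    show "Ann ar A \<Omega> = Ann ar A {cong_generated ar A (\<Union>\<Omega>)}"
      using Ann_subset_Ann_cong_generated[OF alg sp \<Omega>] Ann_cong_generated_subset[OF \<Omega>] by (rule equalityI)
  qed
  moreover have "{Ann ar A \<Omega> | \<Omega>. \<Omega> \<subseteq> Con ar A} \<subseteq> {Ann ar A {\<theta>} | \<theta>. \<theta> \<in> Con ar A}"
    using principal by blast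
  moreover have "{Ann ar A {\<theta>} | \<theta>. \<theta> \<in> Con ar A} \<subseteq> {Ann ar A \<Omega> | \<Omega>. \<Omega> \<subseteq> Con ar A}"
    by blast
  ultimately show ?thesis by (intro conjI allI impI equalityI)
qed

end
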